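(* Let $\Lambda,K,N$ be positive integers, $\mathcal{U}=\{\mathcal{U}_1,\dots,\mathcal{U}_\Lambda\}$ a partition of $[K]$ into (possibly empty) sets with profile $\boldsymbol{\mathcal{L}}=(\mathcal{L}_1,\dots,\mathcal{L}_\Lambda)$, and for each $\lambda\in[\Lambda]$ let $\boldsymbol{d_\lambda}=(\boldsymbol{d_\lambda}(1),\dots,\boldsymbol{d_\lambda}(|\mathcal{U}_\lambda|))$ be the file indices requested by the users of $\mathcal{U}_\lambda$. Let $\mathcal{G}$ be the side-information graph defined in the context. Let $\sigma_s$ be a permutation of $[\Lambda]$ with $|\mathcal{U}_{\sigma_s(1)}|\ge|\mathcal{U}_{\sigma_s(2)}|\ge\dots\ge|\mathcal{U}_{\sigma_s(\Lambda)}|$ (so $|\mathcal{U}_{\sigma_s(\lambda)}|=\mathcal{L}_\lambda$). Then the subgraph $\mathcal{J}$ of $\mathcal{G}$ induced by the vertex set $$\Big\{W^{\boldsymbol{d_{\sigma_s(\lambda)}}(j)}_{\mathcal{T}} : \lambda\in[\Lambda],\ j\in[\mathcal{L}_\lambda],\ \mathcal{T}\subseteq[\Lambda]\setminus\{\sigma_s(1),\dots,\sigma_s(\lambda)\}\Big\}$$ is acyclic.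
   Context: Index-coding formulation of shared-cache coded caching with uncoded placement: each requested file $W^{\boldsymbol{d_\lambda}(j)}$ is split into disjoint subfiles $W^{\boldsymbol{d_\lambda}(j)}_{\mathcal{T}}$, $\mathcal{T}\subseteq[\Lambda]$, where $W^{n}_{\mathcal{T}}$ is the part of file $W^n$ stored exactly in the caches indexed by $\mathcal{T}$. The side-information graph $\mathcal{G}$ has one vertex for each triple $(\lambda,j,\mathcal{T})$ with $\lambda\in[\Lambda]$, $j\in[|\mathcal{U}_\lambda|]$, $\mathcal{T}\subseteq[\Lambda]$, $\lambda\notin\mathcal{T}$, representing the message $W^{\boldsymbol{d_\lambda}(j)}_{\mathcal{T}}$ requested by a virtual receiver whose side information is the content of cache $\lambda$. There is a directed edge from vertex $W^{\boldsymbol{d_\lambda}(j)}_{\mathcal{T}}$ to vertex $W^{\boldsymbol{d_{\lambda'}}(j')}_{\mathcal{T}'}$ if and only if $\lambda'\in\mathcal{T}$. An induced subgraph is acyclic if it contains no directed cycle. *)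

theory Defs
  imports Main
begin

text \<open>A vertex (lam, j, T) stands for the message W^{d_lam(j)}_T requested by the
  virtual receiver with side information cache lam.\<close>
type_synonym vertex = "nat \<times> nat \<times> nat set"

definition sig_vertices :: "nat \<Rightarrow> (nat \<Rightarrow> nat set) \<Rightarrow> vertex set" where
  "sig_vertices \<Lambda> U = {(l, j, T). l \<in> {1..\<Lambda>} \<and> j \<in> {1..card (U l)} \<and> T \<subseteq> {1..\<Lambda>} \<and> l \<notin> T}"

definition sig_edges :: "nat \<Rightarrow> (nat \<Rightarrow> nat set) \<Rightarrow> (vertex \<times> vertex) set" where
  "sig_edges \<Lambda> U = {((l, j, T), (l', j', T')).
      (l, j, T) \<in> sig_vertices \<Lambda> U \<and> (l', j', T') \<in> sig_vertices \<Lambda> U \<and> l' \<in> T}"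

definition induced_subgraph :: "('a \<times> 'a) set \<Rightarrow> 'a set \<Rightarrow> ('a \<times> 'a) set" where
  "induced_subgraph E S = Restr E S"

end

theory Submission
  imports Defs
begin

text \<open>A vertex \<open>(\<sigma> l, j, T)\<close> of \<open>\<J>\<close> has \<open>T\<close> disjoint from \<open>\<sigma> ` {1..l}\<close>, so any edge
  leaving it points to a vertex \<open>(\<sigma> l', j', T')\<close> with \<open>l' > l\<close>. The position \<open>l\<close> in the
  ordering \<open>\<sigma>\<close> therefore strictly increases along every edge of \<open>\<J>\<close>, which rules out cycles.\<close>

lemma sig_edge_increases_position:
  assumes "l' \<in> {1..\<Lambda>}"
    and "T \<subseteq> {1..\<Lambda>} - \<sigma> ` {1..l}"
    and "((\<sigma> l, j, T), (\<sigma> l', j', T')) \<in> sig_edges \<Lambda> U"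
  shows "l < l'"
proof -
  have "\<sigma> l' \<in> T" using assms(3) by (simp add: sig_edges_def)
  with assms(2) have "\<sigma> l' \<notin> \<sigma> ` {1..l}" by blast
  then have "l' \<notin> {1..l}" by blast
  with assms(1) show ?thesis by simp
qed

lemma acyclic_induced_sig_subgraph:
  assumes "inj_on \<sigma> {1..\<Lambda>}"
  shows "acyclic (induced_subgraph (sig_edges \<Lambda> U)
           {(\<sigma> l, j, T) | l j T. l \<in> {1..\<Lambda>} \<and> j \<in> {1..card (U (\<sigma> l))}
                \<and> T \<subseteq> {1..\<Lambda>} - \<sigma> ` {1..l}})"
    (is "acyclic (induced_subgraph _ ?S)")
proof -
  define position where "position v = inv_into {1..\<Lambda>} \<sigma> (fst v)" for v :: vertex
  have position_eq: "position (\<sigma> l, j, T) = l" if "l \<in> {1..\<Lambda>}" for l j T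
    using inv_into_f_f[OF assms that] by (simp add: position_def)
  let ?J = "induced_subgraph (sig_edges \<Lambda> U) ?S"
  have "position v < position w" if "(v, w) \<in> ?J" for v w
  proof -
    from that have edge: "(v, w) \<in> sig_edges \<Lambda> U" and "v \<in> ?S" and "w \<in> ?S"
      by (simp_all add: induced_subgraph_def)
    then obtain l j T l' j' T' where
      v: "v = (\<sigma> l, j, T)" "l \<in> {1..\<Lambda>}" "T \<subseteq> {1..\<Lambda>} - \<sigma> ` {1..l}" and
      w: "w = (\<sigma> l', j', T')" "l' \<in> {1..\<Lambda>}"
      by auto
    have "l < l'" using sig_edge_increases_position[OF w(2) v(3)] edge by (simp add: v(1) w(1))
    then show ?thesis using v w position_eq by simp
  qed
  then have "acyclic (?J\<inverse>)" by (intro acyclicI_order[where f = position]) simp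
  then show ?thesis by simp
qed

theorem lemma2:
  fixes \<Lambda> K N :: nat
    and U :: "nat \<Rightarrow> nat set"
    and d :: "nat \<Rightarrow> nat \<Rightarrow> nat"
    and \<sigma> :: "nat \<Rightarrow> nat"
  assumes "\<Lambda> > 0" and "K > 0" and "N > 0"
    and part_sub: "\<forall>l\<in>{1..\<Lambda>}. U l \<subseteq> {1..K}"
    and part_disj: "\<forall>l\<in>{1..\<Lambda>}. \<forall>l'\<in>{1..\<Lambda>}. l \<noteq> l' \<longrightarrow> U l \<inter> U l' = {}"
    and part_cover: "(\<Union>l\<in>{1..\<Lambda>}. U l) = {1..K}"
    and demands: "\<forall>l\<in>{1..\<Lambda>}. \<forall>j\<in>{1..card (U l)}. d l j \<in> {1..N}"
    and perm: "bij_betw \<sigma> {1..\<Lambda>} {1..\<Lambda>}"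
    and sorted: "\<forall>a\<in>{1..\<Lambda>}. \<forall>b\<in>{1..\<Lambda>}. a \<le> b \<longrightarrow> card (U (\<sigma> b)) \<le> card (U (\<sigma> a))"
  shows "acyclic (induced_subgraph (sig_edges \<Lambda> U)
           {(\<sigma> l, j, T) | l j T. l \<in> {1..\<Lambda>} \<and> j \<in> {1..card (U (\<sigma> l))}
                \<and> T \<subseteq> {1..\<Lambda>} - \<sigma> ` {1..l}})"
  using acyclic_induced_sig_subgraph bij_betw_imp_inj_on[OF perm] .

end
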